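(* (1) Let $R$ be a $\delta$-$\mathbb{Z}_{(p)}$-algebra and $t_1,t_2,\tau_{12}\in R$ with $\delta(t_1)=\delta(t_2)=0$ and $p\tau_{12}=t_2-t_1$. Put $\tau_{21}=-\tau_{12}$ and, for $(i,j)\in\{(1,2),(2,1)\}$, $\sigma_{ij}=(1-p^{p-1})^{-1}\big(-\delta(\tau_{ij})+\sum_{\nu=1}^{p-1}\frac1p\binom p\nu t_i^{p-\nu}p^{\nu-1}\tau_{ij}^\nu\big)$ (which satisfies $\tau_{ij}^p=p\sigma_{ij}$). Then $\sigma_{21}=(-1)^p\sigma_{12}$. (2) Let $R$ be a $\delta$-$\mathbb{Z}_{(p)}$-algebra and $t_1,t_2,t_3,\tau_{12},\tau_{13}\in R$ with $\delta(t_i)=0$ ($i=1,2,3$), $p\tau_{12}=t_2-t_1$, $p\tau_{13}=t_3-t_1$. Put $\tau_{23}=\tau_{13}-\tau_{12}$ and for $(i,j)\in\{(1,2),(1,3),(2,3)\}$ define $\sigma_{ij}=(1-p^{p-1})^{-1}\big(-\delta(\tau_{ij})+\sum_{\nu=1}^{p-1}\frac1p\binom p\nu t_i^{p-\nu}p^{\nu-1}\tau_{ij}^\nu\big)$. Then $$\sigma_{23}=\sigma_{13}+(-1)^p\sigma_{12}+\sum_{\nu=1}^{p-1}\frac1p\binom p\nu\tau_{13}^\nu(-\tau_{12})^{p-\nu}.$$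
   Context: $p$ a fixed prime; a $\delta$-ring is a commutative ring with $\delta$ satisfying $\delta(0)=\delta(1)=0$, $\delta(x+y)=\delta(x)+\delta(y)-\sum_{i=1}^{p-1}\frac1p\binom pi x^iy^{p-i}$, $\delta(xy)=\delta(x)y^p+x^p\delta(y)+p\delta(x)\delta(y)$. A $\delta$-$\mathbb{Z}_{(p)}$-algebra is a $\delta$-ring that is a $\mathbb{Z}_{(p)}$-algebra (with the unique $\delta$-structure on $\mathbb{Z}_{(p)}$). *)

theory Defs
  imports "HOL-Computational_Algebra.Primes"
begin

text \<open>Binomial quotient (1/p) * binom(p,i), an integer for prime p and 1 \<le> i \<le> p-1.\<close>

definition delta_ring :: "nat \<Rightarrow> ('a::comm_ring_1 \<Rightarrow> 'a) \<Rightarrow> bool" where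
  "delta_ring p \<delta> \<longleftrightarrow>
     \<delta> 0 = 0 \<and> \<delta> 1 = 0 \<and>
     (\<forall>x y. \<delta> (x + y) = \<delta> x + \<delta> y
        - (\<Sum>i=1..p-1. of_nat ((p choose i) div p) * x ^ i * y ^ (p - i))) \<and>
     (\<forall>x y. \<delta> (x * y) = \<delta> x * y ^ p + x ^ p * \<delta> y + of_nat p * \<delta> x * \<delta> y)"

definition zp_algebra :: "nat \<Rightarrow> 'a::comm_ring_1 itself \<Rightarrow> bool" where
  "zp_algebra p _ \<longleftrightarrow> (\<forall>n::int. coprime n (int p) \<longrightarrow> (of_int n :: 'a) dvd 1)"

definition delta_zp_algebra :: "nat \<Rightarrow> ('a::comm_ring_1 \<Rightarrow> 'a) \<Rightarrow> bool" where
  "delta_zp_algebra p \<delta> \<longleftrightarrow> delta_ring p \<delta> \<and> zp_algebra p TYPE('a)"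

definition sigma :: "nat \<Rightarrow> ('a::comm_ring_1 \<Rightarrow> 'a) \<Rightarrow> 'a \<Rightarrow> 'a \<Rightarrow> 'a" where
  "sigma p \<delta> t \<tau> = (THE s. (1 - of_nat p ^ (p - 1)) * s =
      - \<delta> \<tau> + (\<Sum>\<nu>=1..p-1. of_nat ((p choose \<nu>) div p) * t ^ (p - \<nu>)
                        * of_nat p ^ (\<nu> - 1) * \<tau> ^ \<nu>))"

end

(* Write u = 1 - p^(p-1); it equals delta(p) and is a unit in a Z_(p)-algebra, and sigma(t, tau)
   is characterised by u * sigma(t, tau) = -delta(tau) + S(t, tau), with S the sum in its definition.
   Since p^2 S(t, tau) = (t + p tau)^p - t^p - (p tau)^p, the sum S satisfies the cocycle identity
   S(t, a) + S(t + p a, c) = S(t, a + c) + p^(p-1) C(a, c), where p C(x, y) = (x + y)^p - x^p - y^p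
   is the correction term in delta(x + y); being an identity of integer polynomials, it holds in
   every commutative ring. With the addition rule for delta it yields
   sigma(t, a + c) = sigma(t, a) + sigma(t + p a, c) + C(a, c).
   If delta(t) = delta(t + p tau) = 0, then p sigma(t, tau) = tau^p, which turns
   C(tau, -tau) = tau^p C(1, -1) into -(1 + (-1)^p) sigma(t, tau). The cocycle identity with
   c = -tau gives (1); at the base point t2 with a = -tau12, c = tau13 it gives (2). *)

theory Submission
  imports Defs "HOL-Computational_Algebra.Polynomial"
begin

definition binom_cross :: "nat \<Rightarrow> 'a::comm_ring_1 \<Rightarrow> 'a \<Rightarrow> 'a" where
  "binom_cross p x y = (\<Sum>i=1..p-1. of_nat ((p choose i) div p) * x ^ i * y ^ (p - i))"

definition sigma_sum :: "nat \<Rightarrow> 'a::comm_ring_1 \<Rightarrow> 'a \<Rightarrow> 'a" where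
  "sigma_sum p t \<tau> =
     (\<Sum>\<nu>=1..p-1. of_nat ((p choose \<nu>) div p) * t ^ (p - \<nu>) * of_nat p ^ (\<nu> - 1) * \<tau> ^ \<nu>)"

lemma of_nat_mult_binom_cross:
  fixes x y :: "'a::comm_ring_1"
  assumes "prime p"
  shows "of_nat p * binom_cross p x y = (x + y) ^ p - x ^ p - y ^ p"
proof -
  have p0: "p > 0" using assms prime_gt_0_nat by blast
  have "(x + y) ^ p = (\<Sum>k\<le>p. of_nat (p choose k) * x ^ k * y ^ (p - k))"
    by (rule binomial_ring)
  also have "{..p} = insert 0 (insert p {1..p-1})" using p0 by auto
  also have "(\<Sum>k\<in>insert 0 (insert p {1..p-1}). of_nat (p choose k) * x ^ k * y ^ (p - k))
      = y ^ p + x ^ p + (\<Sum>k=1..p-1. of_nat (p choose k) * x ^ k * y ^ (p - k))"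
    using p0 by (subst sum.insert; simp)+
  also have "(\<Sum>k=1..p-1. of_nat (p choose k) * x ^ k * y ^ (p - k)) = of_nat p * binom_cross p x y"
    unfolding binom_cross_def sum_distrib_left
  proof (rule sum.cong)
    fix k assume "k \<in> {1..p-1}"
    then have "p * ((p choose k) div p) = p choose k"
      using assms by (intro dvd_mult_div_cancel dvd_choose_prime) auto
    then show "of_nat (p choose k) * x ^ k * y ^ (p - k) =
        of_nat p * (of_nat ((p choose k) div p) * x ^ k * y ^ (p - k))"
      by (metis mult.assoc of_nat_mult)
  qed simp
  finally show ?thesis by (simp add: algebra_simps)
qed

lemma binom_cross_commute: "binom_cross p x y = binom_cross p y x"
proof -
  have "binom_cross p x y = (\<Sum>i=1..p-1. of_nat ((p choose (p - i)) div p) * x ^ (p - i) * y ^ i)"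
    unfolding binom_cross_def by (subst sum.atLeastAtMost_rev) (auto intro!: sum.cong)
  also have "\<dots> = binom_cross p y x"
    unfolding binom_cross_def by (intro sum.cong) (auto simp: binomial_symmetric[symmetric])
  finally show ?thesis .
qed

lemma binom_cross_neg_self: "binom_cross p x (- x) = x ^ p * binom_cross p 1 (- 1 :: 'a::comm_ring_1)"
  unfolding binom_cross_def sum_distrib_left
proof (rule sum.cong)
  fix i assume "i \<in> {1..p-1}"
  then have "i + (p - i) = p" by auto
  then have "x ^ i * x ^ (p - i) = x ^ p"
    by (simp flip: power_add)
  moreover have "x ^ i * (- x) ^ (p - i) = (- 1) ^ (p - i) * (x ^ i * x ^ (p - i))"
    by (simp add: power_minus[of x] mult_ac)
  ultimately have "x ^ i * (- x) ^ (p - i) = x ^ p * (- 1) ^ (p - i)"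
    by simp
  then show "of_nat ((p choose i) div p) * x ^ i * (- x) ^ (p - i) =
      x ^ p * (of_nat ((p choose i) div p) * 1 ^ i * (- 1) ^ (p - i))"
    by (simp only: mult.assoc power_one mult_1_left) (rule mult.left_commute)
qed simp

lemma of_nat_mult_sigma_sum:
  "of_nat p * sigma_sum p t \<tau> = binom_cross p (of_nat p * \<tau>) (t::'a::comm_ring_1)"
  unfolding sigma_sum_def binom_cross_def sum_distrib_left
proof (rule sum.cong)
  fix k assume "k \<in> {1..p-1}"
  then have "(of_nat p::'a) ^ k = of_nat p * of_nat p ^ (k - 1)"
    by (metis Suc_diff_1 atLeastAtMost_iff less_eq_Suc_le One_nat_def power_Suc)
  then show "of_nat p * (of_nat ((p choose k) div p) * t ^ (p - k) * of_nat p ^ (k - 1) * \<tau> ^ k) =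
      of_nat ((p choose k) div p) * (of_nat p * \<tau>) ^ k * t ^ (p - k)"
    by (simp add: power_mult_distrib mult_ac)
qed simp

definition ring_hom :: "('a::comm_ring_1 \<Rightarrow> 'b::comm_ring_1) \<Rightarrow> bool" where
  "ring_hom h \<longleftrightarrow>
     h 1 = 1 \<and> (\<forall>x y. h (x + y) = h x + h y) \<and> (\<forall>x y. h (x * y) = h x * h y)"

lemma ring_hom_distribs:
  assumes "ring_hom h"
  shows "h 0 = 0" "h 1 = 1" "h (x + y) = h x + h y" "h (x * y) = h x * h y"
    "h (- x) = - h x" "h (x - y) = h x - h y" "h (of_nat n) = of_nat n"
    "h (x ^ n) = h x ^ n" "h (sum f A) = (\<Sum>i\<in>A. h (f i))"
proof -
  have one: "h 1 = 1" and add: "\<And>x y. h (x + y) = h x + h y" and mult: "\<And>x y. h (x * y) = h x * h y"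
    using assms unfolding ring_hom_def by blast+
  show zero: "h 0 = 0" using add[of 0 0] by simp
  have uminus: "h (- x) = - h x" for x
  proof -
    have "h x + h (- x) = 0" using add[of x "- x"] zero by simp
    then show ?thesis by (rule minus_unique[symmetric])
  qed
  show "h 1 = 1" "h (x + y) = h x + h y" "h (x * y) = h x * h y" "h (- x) = - h x"
    by (fact one add mult uminus)+
  show "h (x - y) = h x - h y" using add[of x "- y"] uminus[of y] by simp
  show "h (of_nat n) = of_nat n" by (induction n) (simp_all add: zero one add)
  show "h (x ^ n) = h x ^ n" by (induction n) (simp_all add: one mult)
  show "h (sum f A) = (\<Sum>i\<in>A. h (f i))"
    by (induction A rule: infinite_finite_induct) (simp_all add: zero add)
qed

lemma ring_hom_of_int: "ring_hom of_int"
  unfolding ring_hom_def by simp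

lemma ring_hom_poly_map_poly:
  assumes "ring_hom h"
  shows "ring_hom (\<lambda>q. poly (map_poly h q) c)"
proof -
  note h = ring_hom_distribs[OF assms]
  have add: "map_poly h (q + r) = map_poly h q + map_poly h r" for q r
    by (intro poly_eqI) (simp add: coeff_map_poly h)
  have mult: "poly (map_poly h (q * r)) c = poly (map_poly h q) c * poly (map_poly h r) c" for q r
  proof (induction q)
    case (pCons a q)
    have "pCons a q * r = smult a r + pCons 0 (q * r)" by (rule mult_pCons_left)
    then show ?case
      using pCons.IH by (simp add: add h map_poly_pCons map_poly_smult algebra_simps)
  qed simp
  show ?thesis
    unfolding ring_hom_def by (simp add: add mult h)
qed

lemma binom_cross_ring_hom: "ring_hom h \<Longrightarrow> h (binom_cross p x y) = binom_cross p (h x) (h y)"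
  unfolding binom_cross_def by (simp add: ring_hom_distribs)

lemma sigma_sum_ring_hom: "ring_hom h \<Longrightarrow> h (sigma_sum p t \<tau>) = sigma_sum p (h t) (h \<tau>)"
  unfolding sigma_sum_def by (simp add: ring_hom_distribs)

lemma sigma_sum_cocycle_char_0:
  fixes x a c :: "'a::{idom,ring_char_0}"
  assumes "prime p"
  shows "sigma_sum p x a + sigma_sum p (x + of_nat p * a) c
       = sigma_sum p x (a + c) + of_nat p ^ (p - 1) * binom_cross p a c"
proof -
  define P where "P = (of_nat p :: 'a)"
  have "P \<noteq> 0" using assms by (simp add: P_def prime_gt_0_nat)
  have "P ^ p = P * P ^ (p - 1)"
    using assms by (simp add: P_def prime_gt_0_nat flip: power_Suc)
  have sigma_sum: "P * (P * sigma_sum p t \<tau>) = (t + P * \<tau>) ^ p - t ^ p - P ^ p * \<tau> ^ p" for t \<tau>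
    using of_nat_mult_binom_cross[OF assms, of "P * \<tau>" t] unfolding P_def
    by (simp add: of_nat_mult_sigma_sum power_mult_distrib add.commute)
  have cross: "P * binom_cross p a c = (a + c) ^ p - a ^ p - c ^ p"
    unfolding P_def by (rule of_nat_mult_binom_cross[OF assms])
  have cross_term: "P * (P * (P ^ (p - 1) * binom_cross p a c)) = P ^ p * ((a + c) ^ p - a ^ p - c ^ p)"
    by (simp add: \<open>P ^ p = P * P ^ (p - 1)\<close> flip: cross)
  have "x + P * a + P * c = x + P * (a + c)"
    by (simp add: algebra_simps)
  then have "P * (P * (sigma_sum p x a + sigma_sum p (x + P * a) c))
      = P * (P * (sigma_sum p x (a + c) + P ^ (p - 1) * binom_cross p a c))"
    unfolding distrib_left sigma_sum cross_term by (simp add: algebra_simps)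
  with \<open>P \<noteq> 0\<close> show ?thesis by (simp add: P_def)
qed

lemma sigma_sum_cocycle:
  fixes x a c :: "'a::comm_ring_1"
  assumes "prime p"
  shows "sigma_sum p x a + sigma_sum p (x + of_nat p * a) c
       = sigma_sum p x (a + c) + of_nat p ^ (p - 1) * binom_cross p a c"
proof -
  define ev1 :: "int poly \<Rightarrow> 'a" where "ev1 q = poly (map_poly of_int q) x" for q
  define ev2 where "ev2 q = poly (map_poly ev1 q) a" for q
  define ev where "ev q = poly (map_poly ev2 q) c" for q
  define X A C :: "int poly poly poly"
    where "X = [:[:[:0, 1:]:]:]" and "A = [:[:0, 1:]:]" and "C = [:0, 1:]"
  have "ring_hom ev1" unfolding ev1_def by (intro ring_hom_poly_map_poly ring_hom_of_int)
  then have "ring_hom ev2" unfolding ev2_def by (rule ring_hom_poly_map_poly)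
  then have "ring_hom ev" unfolding ev_def by (rule ring_hom_poly_map_poly)
  have vars: "ev X = x" "ev A = a" "ev C = c"
    using \<open>ring_hom ev1\<close> \<open>ring_hom ev2\<close>
    by (simp_all add: X_def A_def C_def ev_def ev2_def ev1_def map_poly_pCons ring_hom_distribs)
  have "ev (sigma_sum p X A + sigma_sum p (X + of_nat p * A) C)
      = ev (sigma_sum p X (A + C) + of_nat p ^ (p - 1) * binom_cross p A C)"
    by (simp only: sigma_sum_cocycle_char_0[OF assms])
  then show ?thesis
    using \<open>ring_hom ev\<close>
    by (simp add: ring_hom_distribs sigma_sum_ring_hom binom_cross_ring_hom vars)
qed

lemma delta_ringD:
  assumes "delta_ring p \<delta>"
  shows "\<delta> 0 = 0" "\<delta> 1 = 0"
    "\<delta> (x + y) = \<delta> x + \<delta> y - binom_cross p x y"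
    "\<delta> (x * y) = \<delta> x * y ^ p + x ^ p * \<delta> y + of_nat p * \<delta> x * \<delta> y"
  using assms unfolding delta_ring_def binom_cross_def by blast+

lemma delta_of_nat:
  fixes \<delta> :: "'a::comm_ring_1 \<Rightarrow> 'a"
  assumes "prime p" "delta_ring p \<delta>"
  shows "\<exists>d. \<delta> (of_nat n) = of_int d \<and> int p * d = int n - int n ^ p"
proof (induction n)
  case 0
  show ?case
    using assms by (intro exI[of _ 0]) (simp add: delta_ringD power_0_left prime_gt_0_nat)
next
  case (Suc n)
  then obtain d where d: "\<delta> (of_nat n) = of_int d" "int p * d = int n - int n ^ p"
    by blast
  define e where "e = binom_cross p (int n) 1"
  have "ring_hom (of_int :: int \<Rightarrow> 'a)" by (rule ring_hom_of_int)
  from binom_cross_ring_hom[OF this, of p "int n" 1]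
  have "binom_cross p (of_nat n) 1 = (of_int e :: 'a)" by (simp add: e_def)
  then have "\<delta> (of_nat (Suc n)) = of_int (d - e)"
    by (simp add: d add.commute[of 1] delta_ringD[OF assms(2)])
  moreover have "int p * (d - e) = int (Suc n) - int (Suc n) ^ p"
    using of_nat_mult_binom_cross[OF assms(1), of "int n" 1] d(2)
    by (simp add: e_def algebra_simps)
  ultimately show ?case by blast
qed

lemma delta_of_prime:
  assumes "prime p" "delta_ring p \<delta>"
  shows "\<delta> (of_nat p) = 1 - of_nat p ^ (p - 1)"
proof -
  obtain d where d: "\<delta> (of_nat p) = of_int d" "int p * d = int p - int p ^ p"
    using delta_of_nat[OF assms] by blast
  have "int p ^ p = int p * int p ^ (p - 1)"
    using assms(1) by (simp add: prime_gt_0_nat flip: power_Suc)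
  with d(2) have "int p * d = int p * (1 - int p ^ (p - 1))"
    by (simp add: algebra_simps)
  with assms(1) have "d = 1 - int p ^ (p - 1)"
    by (simp add: prime_gt_0_nat)
  with d(1) show ?thesis by simp
qed

lemma zp_algebra_unit:
  assumes "prime p" "zp_algebra p TYPE('a::comm_ring_1)"
  shows "(1 - of_nat p ^ (p - 1) :: 'a) dvd 1"
proof -
  have "p - 1 > 0" using assms(1) by (simp add: prime_gt_Suc_0_nat)
  then have "coprime (int p ^ (p - 1) - 1) (int p)"
    using coprime_diff_one_left[of "int p ^ (p - 1)"] by simp
  then have "coprime (1 - int p ^ (p - 1)) (int p)"
    by (metis coprime_minus_left_iff minus_diff_eq)
  then have "(of_int (1 - int p ^ (p - 1)) :: 'a) dvd 1"
    using assms(2) unfolding zp_algebra_def by blast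
  then show ?thesis by simp
qed

lemma dvd_one_mult_left_cancel:
  fixes u :: "'a::comm_ring_1"
  assumes "u dvd 1"
  shows "u * x = u * y \<longleftrightarrow> x = y"
proof
  obtain v where "1 = u * v" using assms by (rule dvdE)
  assume "u * x = u * y"
  then have "v * (u * x) = v * (u * y)" by simp
  with \<open>1 = u * v\<close> show "x = y" by (simp add: mult.assoc[symmetric] mult.commute[of v])
qed simp

lemma sigma_eq_iff:
  fixes \<delta> :: "'a::comm_ring_1 \<Rightarrow> 'a"
  assumes "prime p" "zp_algebra p TYPE('a)"
  shows "sigma p \<delta> t \<tau> = s \<longleftrightarrow> (1 - of_nat p ^ (p - 1)) * s = - \<delta> \<tau> + sigma_sum p t \<tau>"
proof -
  define u :: 'a where "u = 1 - of_nat p ^ (p - 1)"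
  define r where "r = - \<delta> \<tau> + sigma_sum p t \<tau>"
  have "u dvd 1" unfolding u_def by (rule zp_algebra_unit[OF assms])
  then obtain v where "1 = u * v" by (rule dvdE)
  then have "u * (v * r) = r" by (simp add: mult.assoc[symmetric])
  then have "u * s = r \<longleftrightarrow> u * s = u * (v * r)" for s
    by simp
  then have "u * s = r \<longleftrightarrow> s = v * r" for s
    using dvd_one_mult_left_cancel[OF \<open>u dvd 1\<close>] by simp
  moreover have "sigma p \<delta> t \<tau> = (THE s. u * s = r)"
    unfolding sigma_def sigma_sum_def u_def r_def ..
  ultimately show ?thesis
    unfolding u_def[symmetric] r_def[symmetric] by auto
qed

lemma mult_sigma:
  fixes \<delta> :: "'a::comm_ring_1 \<Rightarrow> 'a"
  assumes "prime p" "zp_algebra p TYPE('a)"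
  shows "(1 - of_nat p ^ (p - 1)) * sigma p \<delta> t \<tau> = - \<delta> \<tau> + sigma_sum p t \<tau>"
  using sigma_eq_iff[OF assms, of \<delta> t \<tau> "sigma p \<delta> t \<tau>"] by simp

lemma sigma_zero_right:
  fixes \<delta> :: "'a::comm_ring_1 \<Rightarrow> 'a"
  assumes "prime p" "delta_zp_algebra p \<delta>"
  shows "sigma p \<delta> t 0 = 0"
proof -
  have "sigma_sum p t (0::'a) = 0"
    unfolding sigma_sum_def by (intro sum.neutral) (auto simp: power_0_left)
  moreover have "\<delta> 0 = 0" and "zp_algebra p TYPE('a)"
    using assms(2) delta_ringD(1) unfolding delta_zp_algebra_def by blast+
  ultimately show ?thesis by (simp add: sigma_eq_iff[OF assms(1)])
qed

lemma of_nat_mult_sigma: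
  fixes \<delta> :: "'a::comm_ring_1 \<Rightarrow> 'a"
  assumes "prime p" "delta_zp_algebra p \<delta>" "\<delta> t = 0" "\<delta> (t + of_nat p * \<tau>) = 0"
  shows "of_nat p * sigma p \<delta> t \<tau> = \<tau> ^ p"
proof -
  have \<delta>: "delta_ring p \<delta>" and zp: "zp_algebra p TYPE('a)"
    using assms(2) unfolding delta_zp_algebra_def by auto
  define P :: 'a where "P = of_nat p"
  define u where "u = 1 - P ^ (p - 1)"
  have "P ^ p = P * P ^ (p - 1)"
    using assms(1) by (simp add: prime_gt_0_nat flip: power_Suc)
  then have "\<delta> (P * \<tau>) = u * \<tau> ^ p + P * \<delta> \<tau>"
    using delta_ringD(4)[OF \<delta>, of P \<tau>] delta_of_prime[OF assms(1) \<delta>]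
    by (simp add: P_def u_def algebra_simps)
  moreover have "\<delta> (P * \<tau>) = P * sigma_sum p t \<tau>"
    using delta_ringD(3)[OF \<delta>, of "P * \<tau>" t] assms(3,4)
    by (simp add: P_def of_nat_mult_sigma_sum add.commute)
  moreover have "u * sigma p \<delta> t \<tau> = - \<delta> \<tau> + sigma_sum p t \<tau>"
    unfolding u_def P_def by (rule mult_sigma[OF assms(1) zp])
  ultimately have "u * (P * sigma p \<delta> t \<tau>) = u * \<tau> ^ p"
    by (simp add: mult.left_commute[of u] right_diff_distrib)
  then show ?thesis
    using zp_algebra_unit[OF assms(1) zp] by (simp add: dvd_one_mult_left_cancel u_def P_def)
qed

lemma binom_cross_neg_self_eq_sigma:
  fixes \<delta> :: "'a::comm_ring_1 \<Rightarrow> 'a"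
  assumes "prime p" "delta_zp_algebra p \<delta>" "\<delta> t = 0" "\<delta> (t + of_nat p * \<tau>) = 0"
  shows "binom_cross p \<tau> (- \<tau>) = - (1 + (- 1) ^ p) * sigma p \<delta> t \<tau>"
proof -
  have "binom_cross p \<tau> (- \<tau>) = (of_nat p * sigma p \<delta> t \<tau>) * binom_cross p 1 (- 1)"
    unfolding binom_cross_neg_self[of p \<tau>] of_nat_mult_sigma[OF assms] ..
  also have "\<dots> = (of_nat p * binom_cross p 1 (- 1)) * sigma p \<delta> t \<tau>"
    by (simp only: mult_ac)
  also have "of_nat p * binom_cross p 1 (- 1 :: 'a) = - (1 + (- 1) ^ p)"
    using of_nat_mult_binom_cross[OF assms(1), of "1::'a" "- 1"] assms(1)
    by (simp add: power_0_left prime_gt_0_nat)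
  finally show ?thesis .
qed

lemma sigma_cocycle:
  fixes \<delta> :: "'a::comm_ring_1 \<Rightarrow> 'a"
  assumes "prime p" "delta_zp_algebra p \<delta>"
  shows "sigma p \<delta> t (a + c)
       = sigma p \<delta> t a + sigma p \<delta> (t + of_nat p * a) c + binom_cross p a c"
proof -
  have \<delta>: "delta_ring p \<delta>" and zp: "zp_algebra p TYPE('a)"
    using assms(2) unfolding delta_zp_algebra_def by auto
  define u :: 'a where "u = 1 - of_nat p ^ (p - 1)"
  have sigma: "u * sigma p \<delta> t' \<tau> = - \<delta> \<tau> + sigma_sum p t' \<tau>" for t' \<tau>
    unfolding u_def by (rule mult_sigma[OF assms(1) zp])
  have "u * (sigma p \<delta> t a + sigma p \<delta> (t + of_nat p * a) c + binom_cross p a c)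
      = - \<delta> a - \<delta> c + (sigma_sum p t a + sigma_sum p (t + of_nat p * a) c) + u * binom_cross p a c"
    by (simp add: distrib_left sigma)
  also have "\<dots> = - (\<delta> a + \<delta> c - binom_cross p a c) + sigma_sum p t (a + c)"
    unfolding sigma_sum_cocycle[OF assms(1)] by (simp add: u_def algebra_simps)
  also have "\<dots> = - \<delta> (a + c) + sigma_sum p t (a + c)"
    by (simp add: delta_ringD(3)[OF \<delta>])
  finally show ?thesis
    unfolding u_def by (simp add: sigma_eq_iff[OF assms(1) zp])
qed

lemma sigma_neg:
  fixes \<delta> :: "'a::comm_ring_1 \<Rightarrow> 'a"
  assumes "prime p" "delta_zp_algebra p \<delta>" "\<delta> t = 0" "\<delta> (t + of_nat p * \<tau>) = 0"
  shows "sigma p \<delta> (t + of_nat p * \<tau>) (- \<tau>) = (- 1) ^ p * sigma p \<delta> t \<tau>"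
  using sigma_cocycle[OF assms(1,2), of t \<tau> "- \<tau>"] sigma_zero_right[OF assms(1,2)]
    binom_cross_neg_self_eq_sigma[OF assms]
  by (simp add: algebra_simps)

theorem proposition3p5:
  fixes p :: nat and \<delta> :: "'a::comm_ring_1 \<Rightarrow> 'a"
  assumes "prime p"
    and "delta_zp_algebra p \<delta>"
  shows "(\<forall>t1 t2 \<tau>12. \<delta> t1 = 0 \<and> \<delta> t2 = 0 \<and> of_nat p * \<tau>12 = t2 - t1 \<longrightarrow>
            sigma p \<delta> t2 (- \<tau>12) = (-1) ^ p * sigma p \<delta> t1 \<tau>12)
       \<and> (\<forall>t1 t2 t3 \<tau>12 \<tau>13.
            \<delta> t1 = 0 \<and> \<delta> t2 = 0 \<and> \<delta> t3 = 0 \<and>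
            of_nat p * \<tau>12 = t2 - t1 \<and> of_nat p * \<tau>13 = t3 - t1 \<longrightarrow>
            sigma p \<delta> t2 (\<tau>13 - \<tau>12) =
              sigma p \<delta> t1 \<tau>13 + (-1) ^ p * sigma p \<delta> t1 \<tau>12
              + (\<Sum>\<nu>=1..p-1. of_nat ((p choose \<nu>) div p) * \<tau>13 ^ \<nu> * (- \<tau>12) ^ (p - \<nu>)))"
proof (intro conjI allI impI; elim conjE)
  fix t1 t2 \<tau>12 :: 'a
  assume "\<delta> t1 = 0" "\<delta> t2 = 0" "of_nat p * \<tau>12 = t2 - t1"
  then show "sigma p \<delta> t2 (- \<tau>12) = (-1) ^ p * sigma p \<delta> t1 \<tau>12"
    using sigma_neg[OF assms, of t1 \<tau>12] by (simp add: algebra_simps)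
next
  fix t1 t2 t3 \<tau>12 \<tau>13 :: 'a
  assume "\<delta> t1 = 0" "\<delta> t2 = 0" "of_nat p * \<tau>12 = t2 - t1"
  then have t2: "t2 = t1 + of_nat p * \<tau>12" and t1: "t1 = t2 + of_nat p * (- \<tau>12)"
    by (simp_all add: algebra_simps)
  have "sigma p \<delta> t2 (\<tau>13 - \<tau>12)
      = sigma p \<delta> t2 (- \<tau>12) + sigma p \<delta> t1 \<tau>13 + binom_cross p (- \<tau>12) \<tau>13"
    using sigma_cocycle[OF assms, of t2 "- \<tau>12" \<tau>13] t1 by simp
  also have "sigma p \<delta> t2 (- \<tau>12) = (-1) ^ p * sigma p \<delta> t1 \<tau>12"
    using sigma_neg[OF assms, of t1 \<tau>12] t2 \<open>\<delta> t1 = 0\<close> \<open>\<delta> t2 = 0\<close> by simp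
  also have "binom_cross p (- \<tau>12) \<tau>13 = binom_cross p \<tau>13 (- \<tau>12)"
    by (rule binom_cross_commute)
  finally show "sigma p \<delta> t2 (\<tau>13 - \<tau>12) =
      sigma p \<delta> t1 \<tau>13 + (-1) ^ p * sigma p \<delta> t1 \<tau>12
      + (\<Sum>\<nu>=1..p-1. of_nat ((p choose \<nu>) div p) * \<tau>13 ^ \<nu> * (- \<tau>12) ^ (p - \<nu>))"
    by (simp add: binom_cross_def add_ac)
qed

end
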